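(* For every $\delta>0$ there exists a real number $\varepsilon$ with $0<\varepsilon<\delta$ such that $$\inf_{n \ge 1} \, \Vert (1 + \varepsilon)^n \Vert > 2^{-17}\, \varepsilon\, |\log \varepsilon|^{-1}.$$
   Context: For a real number $x$, $\Vert x \Vert$ denotes the distance from $x$ to the nearest integer. $\log$ denotes the natural logarithm. The infimum is over all positive integers $n$. *)

theory Defs
  imports "HOL-Analysis.Analysis"
begin

definition dist_int :: "real \<Rightarrow> real" where
  "dist_int x = \<bar>x - of_int (round x)\<bar>"

end

theory Submission
  imports Defs
begin

text \<open>Fix a large \<open>p\<close>, put \<open>eta = 2^-p / (2^12 p)\<close> and look for \<open>x = 1 + \<epsilon>\<close> in
  \<open>X = [1 + 2^-p, 1 + 2^(1-p))\<close>.  For each \<open>k\<close> cut \<open>X\<close> into the coarsest dyadic cells on which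
  \<open>y^k\<close> varies by at most \<open>eta\<close>, and let \<open>S_n\<close> consist of the points whose cell for \<open>k\<close> avoids
  \<open>\<parallel>y^k\<parallel> < eta\<close> for all \<open>k \<le> n\<close>.  Passing from \<open>S_n\<close> to \<open>S_(n+1)\<close> loses only points with
  \<open>\<parallel>x^(n+1)\<parallel> < 2 eta\<close>.  For the first \<open>L \<approx> 2p 2^p\<close> steps a direct count of near-integer
  values of \<open>x^(n+1)\<close> bounds this loss; afterwards \<open>x^(n+1)\<close> sweeps over several integers on
  each cell of \<open>S_(n+1-L)\<close>, so at most a \<open>30 eta\<close> fraction of that set is lost.  This gives a
  recursion keeping the measure of \<open>S_n\<close> positive for all \<open>n\<close>, and compactness produces
  \<open>x\<close> with \<open>\<parallel>x^n\<parallel> \<ge> eta\<close> for all \<open>n \<ge> 1\<close>; finally \<open>eta > 2^-17 \<epsilon> / \<bar>log \<epsilon>\<bar>\<close>.\<close>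

lemma dist_int_le_abs_diff: "dist_int x \<le> \<bar>x - of_int m\<bar>"
  unfolding dist_int_def by (rule round_diff_minimal)

lemma dist_int_triangle: "dist_int x \<le> dist_int y + \<bar>x - y\<bar>"
proof -
  have "dist_int x \<le> \<bar>x - of_int (round y)\<bar>" by (rule dist_int_le_abs_diff)
  also have "\<dots> \<le> \<bar>y - of_int (round y)\<bar> + \<bar>x - y\<bar>" by linarith
  finally show ?thesis unfolding dist_int_def .
qed

lemma continuous_on_dist_int: "continuous_on UNIV dist_int"
proof (rule continuous_onI)
  fix x e :: real assume "e > 0"
  have "dist (dist_int y) (dist_int x) \<le> dist y x" for y
    using dist_int_triangle[of y x] dist_int_triangle[of x y] by (simp add: dist_real_def)
  then show "\<exists>d>0. \<forall>y\<in>UNIV. dist y x < d \<longrightarrow> dist (dist_int y) (dist_int x) \<le> e"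
    using \<open>e > 0\<close> by (meson less_imp_le order_trans)
qed

lemma borel_measurable_dist_int [measurable]: "dist_int \<in> borel_measurable borel"
  by (rule borel_measurable_continuous_onI[OF continuous_on_dist_int])

lemma fmeasurable_lborel_subset_Icc:
  "S \<subseteq> {a..b::real} \<Longrightarrow> S \<in> sets lborel \<Longrightarrow> S \<in> fmeasurable lborel"
  by (rule fmeasurableI2[of "{a..b}"]) (auto simp: fmeasurable_def emeasure_lborel_Icc_eq)

lemma sum_int_telescope:
  fixes g :: "int \<Rightarrow> 'a::ab_group_add"
  assumes "a \<le> b + 1"
  shows "(\<Sum>m\<in>{a..b}. g m - g (m - 1)) = g b - g (a - 1)"
proof -
  have "a - 1 \<le> b" using assms by simp
  then show ?thesis
  proof (induction b rule: int_ge_induct)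
    case (step i)
    have "{a..i + 1} = insert (i + 1) {a..i}" using step.hyps by auto
    then show ?case using step.IH by simp
  qed simp
qed

subsection \<open>Growth of powers\<close>

lemma power_diff_ge:
  fixes s t :: real
  assumes "0 \<le> s" "s \<le> t"
  shows "real n * s^(n-1) * (t - s) \<le> t^n - s^n"
proof (induction n)
  case (Suc n)
  show ?case
  proof (cases n)
    case (Suc j)
    have "t^Suc n - s^Suc n = t*(t^n - s^n) + s^n*(t-s)" by (simp add: algebra_simps)
    moreover have "s*(real n * s^(n-1) * (t - s)) \<le> t*(t^n - s^n)"
      using Suc.IH assms by (intro mult_mono) auto
    moreover have "s*(real n * s^(n-1) * (t - s)) = real n * s^n * (t-s)"
      using Suc by (simp add: algebra_simps)
    ultimately show ?thesis by (simp add: algebra_simps)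
  qed simp
qed simp

lemma power_diff_le:
  fixes s t :: real
  assumes "0 \<le> s" "s \<le> t"
  shows "t^n - s^n \<le> real n * t^(n-1) * (t - s)"
proof (induction n)
  case (Suc n)
  show ?case
  proof (cases n)
    case (Suc j)
    have "t^Suc n - s^Suc n = t*(t^n - s^n) + s^n*(t-s)" by (simp add: algebra_simps)
    moreover have "t*(t^n - s^n) \<le> t*(real n * t^(n-1) * (t - s))"
      using Suc.IH assms by (intro mult_left_mono) auto
    moreover have "s^n*(t-s) \<le> t^n * (t-s)"
      using assms by (intro mult_right_mono power_mono) auto
    moreover have "t*(real n * t^(n-1) * (t - s)) = real n * t^n * (t-s)"
      using Suc by (simp add: algebra_simps)
    ultimately show ?thesis by (simp add: algebra_simps)
  qed simp
qed simp

lemma power_diff_mono_exponent: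
  fixes u h :: real
  assumes "1 \<le> u" "0 \<le> h" "i \<le> k"
  shows "(u+h)^i - u^i \<le> (u+h)^k - u^k"
  using assms(3)
proof (induction k rule: dec_induct)
  case (step k)
  have "(u+h)^Suc k - u^Suc k = (u+h)*((u+h)^k - u^k) + h*u^k" by (simp add: algebra_simps)
  moreover have "0 \<le> (u+h)^k - u^k" using assms by (simp add: power_mono)
  then have "(u+h)^k - u^k \<le> (u+h)*((u+h)^k - u^k)"
    using assms by (simp add: mult_le_cancel_right1)
  moreover have "0 \<le> h*u^k" using assms by simp
  ultimately show ?case using step.IH by linarith
qed simp

lemma one_plus_power_le_2:
  fixes t :: real
  assumes "0 \<le> t" "real n * t \<le> 1/2"
  shows "(1+t)^n \<le> 2"
proof -
  have "(1+t)^n \<le> exp t ^ n"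
    using assms by (intro power_mono) (auto simp: exp_ge_add_one_self add.commute)
  also have "\<dots> = exp (real n * t)" by (simp add: exp_of_nat_mult)
  also have "\<dots> \<le> exp (1/2)" using assms by simp
  also have "exp (1/2::real) \<le> 2"
  proof -
    have "exp (1/2::real) ^ 2 = exp 1"
      by (simp add: power2_eq_square exp_add[symmetric])
    also have "\<dots> \<le> 2^2" using exp_le by simp
    finally show ?thesis by (rule power2_le_imp_le) simp
  qed
  finally show ?thesis .
qed

lemma add_power_le_2_power:
  fixes u t :: real
  assumes "1 \<le> u" "0 \<le> t" "real n * t \<le> 1/2"
  shows "(u + t)^n \<le> 2 * u^n"
proof -
  have "t * 1 \<le> t * u" using assms by (intro mult_left_mono) auto
  then have "(u + t)^n \<le> (u * (1 + t))^n" using assms by (intro power_mono) (auto simp: algebra_simps)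
  also have "\<dots> = u^n * (1 + t)^n" by (simp add: power_mult_distrib)
  also have "\<dots> \<le> u^n * 2" using assms one_plus_power_le_2[of t n] by (intro mult_left_mono) auto
  finally show ?thesis by simp
qed

subsection \<open>Powers close to integers\<close>

lemma measure_power_near_value_le:
  fixes p q c \<beta> :: real
  assumes p: "1 \<le> p" and k: "1 \<le> k" and \<beta>: "0 < \<beta>"
  shows "measure lborel {x\<in>{p..<q}. \<bar>x^k - c\<bar> < \<beta>} \<le> 4*\<beta> / (real k * p^(k-1))"
    (is "measure lborel ?E \<le> _")
proof (cases "?E = {}")
  case False
  define d where "d = real k * p^(k-1)"
  have d: "0 < d" using p k by (simp add: d_def)
  have close: "t - s \<le> 2*\<beta>/d" if "s \<in> ?E" "t \<in> ?E" "s \<le> t" for s t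
  proof -
    have "d * (t - s) \<le> real k * s^(k-1) * (t - s)"
      unfolding d_def using that p by (intro mult_right_mono mult_left_mono power_mono) auto
    also have "\<dots> \<le> t^k - s^k" using that p by (intro power_diff_ge) auto
    also have "\<dots> < 2*\<beta>" using that by auto
    finally show ?thesis using d by (simp add: field_simps)
  qed
  from False obtain x0 where x0: "x0 \<in> ?E" by auto
  have "?E \<subseteq> {x0 - 2*\<beta>/d .. x0 + 2*\<beta>/d}"
    using close[OF _ x0] close[OF x0] by (force simp del: mem_Collect_eq)
  then have "measure lborel ?E \<le> measure lborel {x0 - 2*\<beta>/d .. x0 + 2*\<beta>/d}"
    by (intro measure_mono_fmeasurable) (auto simp: fmeasurable_def emeasure_lborel_Icc_eq)
  also have "\<dots> = 4*\<beta>/d" using \<beta> d by (simp add: measure_lborel_Icc)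
  finally show ?thesis by (simp add: d_def)
next
  case True
  then show ?thesis using assms unfolding True by simp
qed

text \<open>The root gaps on the right telescope when summed over integers \<open>c\<close>.\<close>
lemma measure_power_near_value_le_root_gap:
  fixes c \<beta> :: real
  assumes S: "S \<in> sets lborel" "S \<subseteq> {0..}"
    and c: "2 \<le> c" and k: "1 \<le> k" and \<beta>: "0 < \<beta>" "\<beta> \<le> 1/4"
  shows "measure lborel {x\<in>S. \<bar>x^k - c\<bar> < \<beta>} \<le> 3*\<beta>*(root k c - root k (c - 1))"
    (is "measure lborel ?E \<le> _")
proof -
  define A where "A = root k (c - \<beta>)"
  define B where "B = root k (c + \<beta>)"
  define C where "C = root k (c - 1)"
  have kpos: "0 < k" using k by simp
  have Ak: "A ^ k = c - \<beta>" and Bk: "B ^ k = c + \<beta>" and Ck: "C ^ k = c - 1"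
    unfolding A_def B_def C_def using c \<beta> kpos by (auto intro: real_root_pow_pos2)
  have C1: "1 \<le> C" unfolding C_def using c kpos by simp
  have CA: "C \<le> A" and AB: "A \<le> B" and Ac: "A \<le> root k c"
    unfolding A_def B_def C_def using \<beta> kpos by (simp_all add: real_root_le_iff)
  define D where "D = real k * A ^ (k-1)"
  have D: "0 < D" using C1 CA kpos by (simp add: D_def)
  have "D * (B - A) \<le> 2*\<beta>"
    using power_diff_ge[of A B k] C1 CA AB Ak Bk by (simp add: D_def)
  also have "2*\<beta> \<le> 3*\<beta>*(1 - \<beta>)" using \<beta> by (simp add: algebra_simps)
  also have "1 - \<beta> \<le> D * (A - C)"
    using power_diff_le[of C A k] C1 CA Ak Ck by (simp add: D_def)
  finally have "D * (B - A) \<le> D * (3*\<beta>*(A - C))"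
    using \<beta> by (simp add: algebra_simps mult_left_mono)
  then have BA: "B - A \<le> 3*\<beta>*(A - C)" using D by simp
  have "?E \<subseteq> {A..B}"
  proof
    fix x assume x: "x \<in> ?E"
    then have "A < root k (x^k)" "root k (x^k) < B"
      unfolding A_def B_def using kpos by (auto simp: real_root_less_iff)
    then show "x \<in> {A..B}" using x S kpos by (auto simp: real_root_pos2)
  qed
  then have "measure lborel ?E \<le> measure lborel {A..B}"
    using S by (intro measure_mono_fmeasurable) (auto simp: fmeasurable_def emeasure_lborel_Icc_eq)
  also have "\<dots> = B - A" using AB by (simp add: measure_lborel_Icc)
  also have "\<dots> \<le> 3*\<beta>*(root k c - C)" using BA Ac \<beta> by (smt (verit) mult_left_mono)
  finally show ?thesis by (simp add: C_def)
qed

lemma sum_measure_power_near_integers_le: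
  fixes p q \<beta> :: real
  assumes p: "1 \<le> p" and pq: "p \<le> q" and k: "1 \<le> k" and \<beta>: "0 < \<beta>" "\<beta> \<le> 1/4"
  shows "(\<Sum>m\<in>{\<lfloor>p^k\<rfloor>+2..\<lfloor>q^k\<rfloor>}. measure lborel {x\<in>{p..<q}. \<bar>x^k - of_int m\<bar> < \<beta>}) \<le> 3*\<beta>*(q - p)"
proof -
  define P where "P = \<lfloor>p^k\<rfloor>"
  define Q where "Q = \<lfloor>q^k\<rfloor>"
  have kpos: "0 < k" using k by simp
  have P1: "1 \<le> P" unfolding P_def using p by (simp add: one_le_power)
  have "(\<Sum>m\<in>{P+2..Q}. measure lborel {x\<in>{p..<q}. \<bar>x^k - of_int m\<bar> < \<beta>})
      \<le> (\<Sum>m\<in>{P+2..Q}. 3*\<beta>*(root k m - root k (m-1)))"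
  proof (rule sum_mono)
    fix m assume "m \<in> {P+2..Q}"
    then have "2 \<le> (of_int m :: real)" using P1 by simp
    then show "measure lborel {x\<in>{p..<q}. \<bar>x^k - of_int m\<bar> < \<beta>} \<le> 3*\<beta>*(root k m - root k (m-1))"
      using measure_power_near_value_le_root_gap[of "{p..<q}" "of_int m" k \<beta>] p k \<beta> by force
  qed
  also have "\<dots> \<le> 3*\<beta>*(q - p)"
  proof (cases "P + 2 \<le> Q + 1")
    case True
    have "(\<Sum>m\<in>{P+2..Q}. 3*\<beta>*(root k m - root k (m-1)))
        = 3*\<beta>*(\<Sum>m\<in>{P+2..Q}. root k (of_int m) - root k (of_int (m-1)))"
      by (simp add: sum_distrib_left)
    also have "\<dots> = 3*\<beta>*(root k Q - root k (of_int (P + 2 - 1)))"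
      using sum_int_telescope[OF True, of "\<lambda>m. root k (of_int m)"] by (simp only:)
    finally have "(\<Sum>m\<in>{P+2..Q}. 3*\<beta>*(root k m - root k (m-1))) = 3*\<beta>*(root k Q - root k (P + 1))"
      by (simp add: add.commute[of 1])
    moreover have "root k Q \<le> root k (q^k)" "root k (p^k) \<le> root k (P + 1)"
      using kpos unfolding P_def Q_def by simp_all
    moreover have "root k (q^k) = q" "root k (p^k) = p"
      using p pq kpos by (simp_all add: real_root_pos2)
    ultimately show ?thesis using \<beta> by simp
  qed (use pq \<beta> in simp)
  finally show ?thesis by (simp add: P_def Q_def)
qed

lemma measure_power_near_integers:
  fixes p q \<beta> :: real
  assumes p: "1 \<le> p" and pq: "p \<le> q" and k: "1 \<le> k" and \<beta>: "0 < \<beta>" "\<beta> \<le> 1/4"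
  shows "measure lborel {x\<in>{p..<q}. dist_int (x^k) < \<beta>} \<le> 3*\<beta>*(q-p) + 12*\<beta>/(real k * p^(k-1))"
proof -
  define E where "E m = {x\<in>{p..<q}. \<bar>x^k - of_int m\<bar> < \<beta>}" for m :: int
  define P where "P = \<lfloor>p^k\<rfloor>"
  define Q where "Q = \<lfloor>q^k\<rfloor>"
  define d where "d = real k * p^(k-1)"
  have E_meas: "E m \<in> sets lborel" for m unfolding E_def by measurable
  have edge: "measure lborel (E m) \<le> 4*\<beta>/d" for m
    unfolding E_def d_def using assms by (intro measure_power_near_value_le)
  have middle: "(\<Sum>m\<in>{P+2..Q}. measure lborel (E m)) \<le> 3*\<beta>*(q - p)"
    unfolding E_def P_def Q_def using assms by (rule sum_measure_power_near_integers_le)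
  have cover: "{x\<in>{p..<q}. dist_int (x^k) < \<beta>} \<subseteq> (\<Union>m\<in>{P+2..Q}. E m) \<union> (E P \<union> E (P+1) \<union> E (Q+1))"
  proof
    fix x assume x: "x \<in> {x\<in>{p..<q}. dist_int (x^k) < \<beta>}"
    define m where "m = round (x^k)"
    have "p^k \<le> x^k" "x^k < q^k" using x p k by (auto intro: power_mono power_strict_mono)
    moreover have xm: "\<bar>x^k - of_int m\<bar> < \<beta>" using x by (simp add: m_def dist_int_def)
    ultimately have "P \<le> m" "m \<le> Q + 1" using \<beta> unfolding P_def Q_def by linarith+
    then have "m \<in> {P+2..Q} \<or> m = P \<or> m = P + 1 \<or> m = Q + 1" by auto
    moreover have "x \<in> E m" using x xm by (simp add: E_def)
    ultimately show "x \<in> (\<Union>m\<in>{P+2..Q}. E m) \<union> (E P \<union> E (P+1) \<union> E (Q+1))" by blast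
  qed
  have "measure lborel {x\<in>{p..<q}. dist_int (x^k) < \<beta>}
      \<le> measure lborel ((\<Union>m\<in>{P+2..Q}. E m) \<union> (E P \<union> E (P+1) \<union> E (Q+1)))"
    using cover by (intro measure_mono_fmeasurable fmeasurable_lborel_subset_Icc[of _ p q])
      (auto simp: E_def)
  also have "\<dots> \<le> measure lborel (\<Union>m\<in>{P+2..Q}. E m) + measure lborel (E P \<union> E (P+1) \<union> E (Q+1))"
    using E_meas by (intro measure_Un_le sets.Un sets.finite_UN) auto
  also have "\<dots> \<le> (\<Sum>m\<in>{P+2..Q}. measure lborel (E m)) + (measure lborel (E P)
      + measure lborel (E (P+1)) + measure lborel (E (Q+1)))"
  proof (rule add_mono)
    show "measure lborel (\<Union>m\<in>{P+2..Q}. E m) \<le> (\<Sum>m\<in>{P+2..Q}. measure lborel (E m))"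
      using E_meas by (intro measure_UNION_le) auto
    have "measure lborel (E P \<union> E (P+1) \<union> E (Q+1)) \<le> measure lborel (E P \<union> E (P+1)) + measure lborel (E (Q+1))"
      using E_meas by (intro measure_Un_le sets.Un)
    also have "measure lborel (E P \<union> E (P+1)) \<le> measure lborel (E P) + measure lborel (E (P+1))"
      using E_meas by (intro measure_Un_le)
    finally show "measure lborel (E P \<union> E (P+1) \<union> E (Q+1))
        \<le> measure lborel (E P) + measure lborel (E (P+1)) + measure lborel (E (Q+1))" by simp
  qed
  also have "\<dots> \<le> 3*\<beta>*(q - p) + 12*\<beta>/d" using middle edge[of P] edge[of "P+1"] edge[of "Q+1"] by simp
  finally show ?thesis by (simp add: d_def)
qed

subsection \<open>Dyadic cells\<close>

definition dyadic_floor :: "nat \<Rightarrow> real \<Rightarrow> real" where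
  "dyadic_floor m x = of_int \<lfloor>x * 2^m\<rfloor> / 2^m"

definition dyadic_cell :: "nat \<Rightarrow> real \<Rightarrow> real set" where
  "dyadic_cell m x = {dyadic_floor m x ..< dyadic_floor m x + 1/2^m}"

definition power_spread :: "nat \<Rightarrow> nat \<Rightarrow> real \<Rightarrow> real" where
  "power_spread k m x = (dyadic_floor m x + 1/2^m)^k - dyadic_floor m x ^ k"

lemma dyadic_cell_eq_Ico:
  "dyadic_cell m x = {of_int \<lfloor>x * 2^m\<rfloor> / 2^m ..< (of_int \<lfloor>x * 2^m\<rfloor> + 1) / 2^m}"
  by (simp add: dyadic_cell_def dyadic_floor_def add_divide_distrib)

lemma mem_dyadic_cell_iff: "y \<in> dyadic_cell m x \<longleftrightarrow> \<lfloor>y * 2^m\<rfloor> = \<lfloor>x * 2^m\<rfloor>"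
proof -
  have "y \<in> dyadic_cell m x \<longleftrightarrow> of_int \<lfloor>x * 2^m\<rfloor> \<le> y * 2^m \<and> y * 2^m < of_int \<lfloor>x * 2^m\<rfloor> + 1"
    unfolding dyadic_cell_eq_Ico by (simp add: divide_simps)
  also have "\<dots> \<longleftrightarrow> \<lfloor>y * 2^m\<rfloor> = \<lfloor>x * 2^m\<rfloor>" by (simp add: floor_eq_iff)
  finally show ?thesis .
qed

lemma dyadic_cell_self: "x \<in> dyadic_cell m x"
  by (simp add: mem_dyadic_cell_iff)

lemma dyadic_cell_sym: "y \<in> dyadic_cell m x \<Longrightarrow> x \<in> dyadic_cell m y"
  by (simp add: mem_dyadic_cell_iff)

lemma dyadic_floor_cong: "y \<in> dyadic_cell m x \<Longrightarrow> dyadic_floor m y = dyadic_floor m x"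
  by (simp add: mem_dyadic_cell_iff dyadic_floor_def)

lemma dyadic_cell_cong: "y \<in> dyadic_cell m x \<Longrightarrow> dyadic_cell m y = dyadic_cell m x"
  using dyadic_floor_cong[of y m x] by (simp add: dyadic_cell_def[of m y] dyadic_cell_def[of m x])

lemma power_spread_cong: "y \<in> dyadic_cell m x \<Longrightarrow> power_spread k m y = power_spread k m x"
  using dyadic_floor_cong[of y m x] by (simp add: power_spread_def)

lemma floor_mult_power2_nest:
  fixes x :: real
  assumes "m \<le> M"
  shows "\<lfloor>x * 2^m\<rfloor> = \<lfloor>x * 2^M\<rfloor> div 2^(M-m)"
proof -
  have "(2::real)^M = 2^m * 2^(M-m)" using assms by (simp add: power_add[symmetric])
  then have "x * 2^m = (x * 2^M) / real_of_int (2^(M-m))" by simp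
  then show ?thesis using floor_divide_real_eq_div[of "2^(M-m)" "x * 2^M"] by simp
qed

lemma dyadic_cell_subset:
  assumes "m \<le> M"
  shows "dyadic_cell M x \<subseteq> dyadic_cell m x"
proof
  fix y assume "y \<in> dyadic_cell M x"
  then show "y \<in> dyadic_cell m x"
    using floor_mult_power2_nest[OF assms, of x] floor_mult_power2_nest[OF assms, of y]
    by (simp add: mem_dyadic_cell_iff)
qed

lemma dyadic_floor_nest:
  assumes "m \<le> M"
  shows "dyadic_floor m x \<le> dyadic_floor M x"
    and "dyadic_floor M x + 1/2^M \<le> dyadic_floor m x + 1/2^m"
proof -
  have "dyadic_floor M x < dyadic_floor M x + 1/2^M" by simp
  then have "dyadic_floor m x \<le> dyadic_floor M x \<and> dyadic_floor M x + 1/2^M \<le> dyadic_floor m x + 1/2^m"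
    using dyadic_cell_subset[OF assms, of x] atLeastLessThan_subset_iff
    unfolding dyadic_cell_def by (metis not_le)
  then show "dyadic_floor m x \<le> dyadic_floor M x" "dyadic_floor M x + 1/2^M \<le> dyadic_floor m x + 1/2^m"
    by simp_all
qed

lemma dyadic_cell_split:
  "dyadic_cell m x = dyadic_cell (Suc m) (dyadic_floor m x) \<union> dyadic_cell (Suc m) (dyadic_floor m x + 1/2^Suc m)"
  "dyadic_cell (Suc m) (dyadic_floor m x) \<inter> dyadic_cell (Suc m) (dyadic_floor m x + 1/2^Suc m) = {}"
proof -
  have "dyadic_floor m x * 2^Suc m = of_int (2 * \<lfloor>x * 2^m\<rfloor>)"
    by (simp add: dyadic_floor_def)
  then have lower: "dyadic_floor (Suc m) (dyadic_floor m x) = dyadic_floor m x"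
    unfolding dyadic_floor_def[of "Suc m" "dyadic_floor m x"] by (simp add: dyadic_floor_def)
  have "(dyadic_floor m x + 1/2^Suc m) * 2^Suc m = of_int (2 * \<lfloor>x * 2^m\<rfloor> + 1)"
    by (simp add: dyadic_floor_def distrib_right)
  then have upper: "dyadic_floor (Suc m) (dyadic_floor m x + 1/2^Suc m) = dyadic_floor m x + 1/2^Suc m"
    unfolding dyadic_floor_def[of "Suc m" "dyadic_floor m x + 1/2^Suc m"]
    by (simp add: dyadic_floor_def add_divide_distrib)
  have "(1::real)/2^m = 1/2^Suc m + 1/2^Suc m" by simp
  then show "dyadic_cell m x = dyadic_cell (Suc m) (dyadic_floor m x) \<union> dyadic_cell (Suc m) (dyadic_floor m x + 1/2^Suc m)"
    unfolding dyadic_cell_def lower upper by auto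
  show "dyadic_cell (Suc m) (dyadic_floor m x) \<inter> dyadic_cell (Suc m) (dyadic_floor m x + 1/2^Suc m) = {}"
    unfolding dyadic_cell_def lower upper by auto
qed

lemma sets_dyadic_cell [measurable, simp]: "dyadic_cell m x \<in> sets borel"
  by (simp add: dyadic_cell_def)

lemma measure_dyadic_cell: "measure lborel (dyadic_cell m x) = 1/2^m"
  by (simp add: dyadic_cell_def)

subsection \<open>The dyadic construction\<close>

text \<open>The lag \<open>L\<close> is chosen so large that
  \<open>y^(j+L)\<close> sweeps over at least two integers on every cell of level \<open>level j x\<close>; the
  hypotheses \<open>early_loss\<close> and \<open>late_decay\<close> are the budgets of the two phases of the
  measure recursion.\<close>
locale dyadic_avoidance =
  fixes p :: nat and eta :: real and L :: nat
  assumes p_pos: "1 \<le> p"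
    and eta_pos: "0 < eta" and eta_less: "eta < 1/2^p" and eta_le: "2*eta \<le> 1/4"
    and L_large: "8/eta \<le> (1 + 1/2^p)^L"
    and eta_L: "eta * (real L + 1) \<le> 1/2"
    and early_loss: "6*eta*(1/2^p)*real L + 24*eta*harm L \<le> (1/2^p)/2"
    and late_decay: "1/2 \<le> (1 - 120*eta)^L" and eta_120: "120*eta < 1"
begin

definition X :: "real set" where
  "X = {1 + 1/2^p ..< 1 + 2/2^p}"

lemma mem_X_iff: "y \<in> X \<longleftrightarrow> \<lfloor>y * 2^p\<rfloor> = 2^p + 1"
proof -
  have "y \<in> X \<longleftrightarrow> 2^p + 1 \<le> y * 2^p \<and> y * 2^p < 2^p + 2"
    unfolding X_def by (auto simp: field_simps)
  also have "\<dots> \<longleftrightarrow> \<lfloor>y * 2^p\<rfloor> = 2^p + 1" unfolding floor_eq_iff by (simp add: add.commute)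
  finally show ?thesis .
qed

lemma dyadic_cell_p_eq_X: "x \<in> X \<Longrightarrow> dyadic_cell p x = X"
  by (auto simp: mem_dyadic_cell_iff mem_X_iff)

lemma dyadic_cell_subset_X: "x \<in> X \<Longrightarrow> p \<le> m \<Longrightarrow> dyadic_cell m x \<subseteq> X"
  using dyadic_cell_subset dyadic_cell_p_eq_X by blast

lemma two_div_power_p_le_1: "2/(2::real)^p \<le> 1"
proof -
  have "(2::real)^1 \<le> 2^p" using p_pos by (intro power_increasing) auto
  then show ?thesis by simp
qed

lemma X_subset_Icc: "X \<subseteq> {1..2}"
proof -
  have "0 \<le> 1/(2::real)^p" by simp
  then show ?thesis unfolding X_def using two_div_power_p_le_1
    by (intro subsetI) (simp only: atLeastLessThan_iff atLeastAtMost_iff; linarith)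
qed

lemma sets_X [measurable, simp]: "X \<in> sets borel"
  by (simp add: X_def)

lemma measure_X: "measure lborel X = 1/2^p"
proof -
  have "1 + 1/2^p \<le> 1 + 2/(2::real)^p" by (simp add: divide_right_mono)
  then have "measure lborel X = (1 + 2/2^p) - (1 + 1/(2::real)^p)"
    unfolding X_def by (rule measure_lborel_Ico)
  then show ?thesis by (simp add: diff_divide_distrib[symmetric])
qed

lemma fmeasurable_subset_X: "A \<subseteq> X \<Longrightarrow> A \<in> sets lborel \<Longrightarrow> A \<in> fmeasurable lborel"
  using X_subset_Icc by (intro fmeasurable_lborel_subset_Icc[of A 1 2]) auto

lemma dyadic_floor_bounds:
  assumes "x \<in> X" "p \<le> m"
  shows "1 + 1/2^p \<le> dyadic_floor m x" and "dyadic_floor m x + 1/2^m \<le> 2"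
proof -
  have "{dyadic_floor m x ..< dyadic_floor m x + 1/2^m} \<subseteq> {1 + 1/2^p ..< 1 + 2/2^p}"
    using dyadic_cell_subset_X[OF assms] unfolding dyadic_cell_def X_def .
  moreover have "dyadic_floor m x < dyadic_floor m x + 1/2^m" by simp
  ultimately have "1 + 1/2^p \<le> dyadic_floor m x \<and> dyadic_floor m x + 1/2^m \<le> 1 + 2/2^p"
    using atLeastLessThan_subset_iff by (metis not_le)
  moreover have "1 + 2/(2::real)^p \<le> 2" using two_div_power_p_le_1 by simp
  ultimately show "1 + 1/2^p \<le> dyadic_floor m x" "dyadic_floor m x + 1/2^m \<le> 2" by linarith+
qed

lemma one_le_dyadic_floor: "x \<in> X \<Longrightarrow> p \<le> m \<Longrightarrow> 1 \<le> dyadic_floor m x"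
  using dyadic_floor_bounds(1)[of x m] zero_le_power[of "2::real" p] by (smt (verit) divide_nonneg_nonneg)

lemma power_spread_ge:
  assumes "x \<in> X" "p \<le> m"
  shows "real k / 2^m \<le> power_spread k m x"
proof -
  let ?u = "dyadic_floor m x"
  have "real k * 1 * (1/2^m) \<le> real k * ?u^(k-1) * (1/2^m)"
    using one_le_dyadic_floor[OF assms] by (intro mult_right_mono mult_left_mono one_le_power) auto
  also have "\<dots> \<le> power_spread k m x"
    unfolding power_spread_def using power_diff_ge[of ?u "?u + 1/2^m" k] one_le_dyadic_floor[OF assms]
    by simp
  finally show ?thesis by simp
qed

lemma power_spread_le: "x \<in> X \<Longrightarrow> p \<le> m \<Longrightarrow> power_spread k m x \<le> real k * 2^k / 2^m"
proof -
  assume x: "x \<in> X" "p \<le> m"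
  let ?u = "dyadic_floor m x"
  have "power_spread k m x \<le> real k * (?u + 1/2^m)^(k-1) * (1/2^m)"
    unfolding power_spread_def using power_diff_le[of ?u "?u + 1/2^m" k] one_le_dyadic_floor[OF x]
    by simp
  also have "\<dots> \<le> real k * 2^k * (1/2^m)"
  proof (intro mult_right_mono mult_left_mono)
    have "(?u + 1/2^m)^(k-1) \<le> 2^(k-1)"
      using dyadic_floor_bounds[OF x] one_le_dyadic_floor[OF x] by (intro power_mono) auto
    also have "(2::real)^(k-1) \<le> 2^k" by (rule power_increasing) auto
    finally show "(?u + 1/2^m)^(k-1) \<le> 2^k" .
  qed auto
  finally show ?thesis by simp
qed

lemma power_spread_mono: "x \<in> X \<Longrightarrow> p \<le> m \<Longrightarrow> i \<le> k \<Longrightarrow> power_spread i m x \<le> power_spread k m x"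
  unfolding power_spread_def using one_le_dyadic_floor by (intro power_diff_mono_exponent) auto

lemma power_spread_eventually_small: "\<exists>M\<ge>p. \<forall>x\<in>X. power_spread k M x \<le> eta"
proof -
  obtain n where n: "real k * 2^k / eta < 2^n" using real_arch_pow[of 2] by auto
  define M where "M = max p n"
  have "real k * 2^k < eta * 2^n" using n eta_pos by (simp add: field_simps)
  also have "\<dots> \<le> eta * 2^M" using eta_pos by (simp add: M_def power_increasing)
  finally have "real k * 2^k / 2^M \<le> eta" by (simp add: field_simps)
  then have "\<forall>x\<in>X. power_spread k M x \<le> eta"
    using power_spread_le[of _ M k] by (fastforce simp: M_def)
  then show ?thesis by (intro exI[of _ M]) (simp add: M_def)
qed

definition level :: "nat \<Rightarrow> real \<Rightarrow> nat" where
  "level k x = (LEAST m. p \<le> m \<and> power_spread k m x \<le> eta)"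

lemma level: "x \<in> X \<Longrightarrow> p \<le> level k x \<and> power_spread k (level k x) x \<le> eta"
  unfolding level_def by (rule LeastI_ex) (use power_spread_eventually_small[of k] in blast)

lemma level_le: "p \<le> m \<Longrightarrow> power_spread k m x \<le> eta \<Longrightarrow> level k x \<le> m"
  unfolding level_def by (rule Least_le) simp

lemma power_spread_below_level: "p \<le> m \<Longrightarrow> m < level k x \<Longrightarrow> eta < power_spread k m x"
  unfolding level_def using not_less_Least by force

lemma level_bounded: "\<exists>M. \<forall>x\<in>X. level k x \<le> M"
  using power_spread_eventually_small[of k] level_le by blast

lemma p_less_level: assumes "x \<in> X" "1 \<le> k" shows "p < level k x"
proof -
  have "eta < 1/2^p" by (rule eta_less)
  also have "\<dots> \<le> real k / 2^p" using assms(2) by (simp add: divide_right_mono)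
  also have "\<dots> \<le> power_spread k p x" using power_spread_ge[OF assms(1), of p k] by simp
  finally have "level k x \<noteq> p" using level[OF assms(1), of k] by auto
  then show ?thesis using level[OF assms(1), of k] by simp
qed

lemma level_mono:
  assumes "x \<in> X" "i \<le> k"
  shows "level i x \<le> level k x"
proof (rule level_le)
  show "p \<le> level k x" using level[OF assms(1)] by simp
  then have "power_spread i (level k x) x \<le> power_spread k (level k x) x"
    using assms by (intro power_spread_mono)
  then show "power_spread i (level k x) x \<le> eta" using level[OF assms(1), of k] by simp
qed

lemma level_cong:
  assumes x: "x \<in> X" and "i \<le> k" and y: "y \<in> dyadic_cell (level k x) x"
  shows "level i y = level i x"
proof -
  have same: "power_spread i m y = power_spread i m x" if "m \<le> level k x" for m
    using dyadic_cell_subset[OF that] y by (intro power_spread_cong) blast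
  have li: "level i x \<le> level k x" by (rule level_mono[OF x \<open>i \<le> k\<close>])
  have y': "y \<in> X" using dyadic_cell_subset_X[OF x] level[OF x, of k] y by blast
  have "level i y \<le> level i x" using level[OF x, of i] same[OF li] by (intro level_le) auto
  moreover have "\<not> level i y < level i x"
  proof
    assume lt: "level i y < level i x"
    have "power_spread i (level i y) x = power_spread i (level i y) y" using lt li by (intro same[symmetric]) simp
    also have "\<dots> \<le> eta" using level[OF y'] by simp
    finally show False using power_spread_below_level[of "level i y" i x] level[OF y'] lt by simp
  qed
  ultimately show ?thesis by simp
qed

text \<open>By \<open>level_cong\<close>, survival is decided by the level-\<open>n\<close> cell of a point, so the survivors
  form a finite union of dyadic cells.\<close>
definition survivors :: "nat \<Rightarrow> real set" where
  "survivors n = {x\<in>X. \<forall>k\<in>{1..n}. \<forall>y\<in>dyadic_cell (level k x) x. eta \<le> dist_int (y^k)}"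

definition near_int :: "nat \<Rightarrow> real set" where
  "near_int n = {x. dist_int (x^n) < 2*eta}"

lemma survivors_subset_X: "survivors n \<subseteq> X"
  by (auto simp: survivors_def)

lemma survivors_0: "survivors 0 = X"
  by (auto simp: survivors_def)

lemma survivors_antimono: "n \<le> n' \<Longrightarrow> survivors n' \<subseteq> survivors n"
  by (auto simp: survivors_def)

lemma dist_int_ge_eta_if_survivor: "x \<in> survivors n \<Longrightarrow> 1 \<le> k \<Longrightarrow> k \<le> n \<Longrightarrow> eta \<le> dist_int (x^k)"
  using dyadic_cell_self by (auto simp: survivors_def)

lemma survivors_cell:
  assumes x: "x \<in> survivors n" and "n \<le> k" and y: "y \<in> dyadic_cell (level k x) x"
  shows "y \<in> survivors n"
proof -
  have x': "x \<in> X" using x survivors_subset_X by blast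
  have "y \<in> X" using dyadic_cell_subset_X[OF x'] level[OF x', of k] y by blast
  moreover have "eta \<le> dist_int (z^i)" if i: "i \<in> {1..n}" and z: "z \<in> dyadic_cell (level i y) y" for i z
  proof -
    have ik: "i \<le> k" using i \<open>n \<le> k\<close> by simp
    have "y \<in> dyadic_cell (level i x) x"
      using dyadic_cell_subset[OF level_mono[OF x' ik]] y by blast
    then have "dyadic_cell (level i y) y = dyadic_cell (level i x) x"
      using level_cong[OF x' ik y] dyadic_cell_cong by simp
    then show ?thesis using x i z by (auto simp: survivors_def)
  qed
  ultimately show ?thesis by (simp add: survivors_def)
qed

lemma survivors_cell_rev:
  assumes "x \<in> X" "n \<le> k" "y \<in> dyadic_cell (level k x) x" "y \<in> survivors n"
  shows "x \<in> survivors n"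
proof -
  have "level k y = level k x" by (rule level_cong[OF assms(1) order_refl assms(3)])
  then have "x \<in> dyadic_cell (level k y) y" using dyadic_cell_sym[OF assms(3)] by simp
  then show ?thesis by (rule survivors_cell[OF assms(4) assms(2)])
qed

text \<open>A point that is eliminated at step \<open>n + 1\<close> shares its level-\<open>(n+1)\<close> cell with some
  \<open>y\<close> having \<open>\<parallel>y^(n+1)\<parallel> < eta\<close>, and \<open>x^(n+1)\<close> differs from \<open>y^(n+1)\<close> by at most \<open>eta\<close>.\<close>
lemma survivors_diff_subset_near_int: "survivors n - survivors (Suc n) \<subseteq> near_int (Suc n)"
proof
  fix x assume x: "x \<in> survivors n - survivors (Suc n)"
  have x': "x \<in> X" using x survivors_subset_X by blast
  obtain k y where k: "k \<in> {1..Suc n}" and y: "y \<in> dyadic_cell (level k x) x"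
    and d: "dist_int (y^k) < eta"
    using x x' by (auto simp: survivors_def not_le)
  have "k = Suc n" using x k y d by (force simp: survivors_def)
  define m where "m = level (Suc n) x"
  have "p \<le> m" and spread: "power_spread (Suc n) m x \<le> eta" using level[OF x'] by (auto simp: m_def)
  have u1: "1 \<le> dyadic_floor m x" using one_le_dyadic_floor[OF x' \<open>p \<le> m\<close>] .
  have "x \<in> dyadic_cell m x" "y \<in> dyadic_cell m x"
    using y \<open>k = Suc n\<close> by (auto simp: m_def dyadic_cell_self)
  then have "dyadic_floor m x ^ Suc n \<le> z ^ Suc n \<and> z ^ Suc n \<le> (dyadic_floor m x + 1/2^m) ^ Suc n"
    if "z \<in> {x, y}" for z
    using that u1 by (auto simp: dyadic_cell_def simp del: power_Suc intro!: power_mono)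
  then have "\<bar>x^Suc n - y^Suc n\<bar> \<le> eta"
    using spread unfolding power_spread_def by (smt (verit) insertCI)
  then show "x \<in> near_int (Suc n)"
    using dist_int_triangle[of "x^Suc n" "y^Suc n"] d \<open>k = Suc n\<close> by (simp add: near_int_def)
qed

lemma sets_near_int [measurable, simp]: "near_int n \<in> sets borel"
  unfolding near_int_def by measurable

lemma sets_survivors [measurable, simp]: "survivors n \<in> sets borel"
proof -
  obtain M0 where M0: "\<forall>x\<in>X. level n x \<le> M0" using level_bounded by blast
  define M where "M = max M0 p"
  define I where "I = (\<lambda>x. \<lfloor>x * 2^M\<rfloor>) ` survivors n"
  define C where "C i = {of_int i / 2^M ..< (of_int i + 1) / (2::real)^M}" for i :: int
  have eq: "survivors n = (\<Union>i\<in>I. C i)"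
  proof
    show "survivors n \<subseteq> (\<Union>i\<in>I. C i)"
      using dyadic_cell_self unfolding I_def C_def dyadic_cell_eq_Ico by blast
    show "(\<Union>i\<in>I. C i) \<subseteq> survivors n"
    proof
      fix y assume "y \<in> (\<Union>i\<in>I. C i)"
      then obtain x where x: "x \<in> survivors n" and y: "y \<in> dyadic_cell M x"
        unfolding I_def C_def dyadic_cell_eq_Ico by blast
      have "level n x \<le> M" using M0 x survivors_subset_X by (force simp: M_def)
      then have "y \<in> dyadic_cell (level n x) x" using dyadic_cell_subset y by blast
      then show "y \<in> survivors n" by (rule survivors_cell[OF x order_refl])
    qed
  qed
  have fin: "finite I"
  proof (rule finite_subset)
    show "I \<subseteq> {0..2^(M+1)}"
    proof
      fix i assume "i \<in> I"
      then obtain x where x: "x \<in> survivors n" and i: "i = \<lfloor>x * 2^M\<rfloor>" unfolding I_def by blast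
      have "x \<in> {1..2}" using x survivors_subset_X X_subset_Icc by blast
      then have "0 \<le> x * 2^M" "x * 2^M < of_int (2^(M+1)) + 1"
        by (auto intro: order.strict_trans1[OF mult_right_mono])
      then show "i \<in> {0..2^(M+1)}" unfolding i by (simp add: floor_le_iff)
    qed
  qed simp
  show ?thesis unfolding eq C_def using fin by (intro sets.finite_UN) auto
qed

text \<open>This is what the lag \<open>L\<close> is for: the parent cell of level \<open>level j x - 1\<close> still has
  \<open>y^j\<close>-spread above \<open>eta\<close>, and raising to the extra power \<open>L\<close> multiplies the spread by at
  least \<open>(1 + 2^-p)^L \<ge> 8/eta\<close>.\<close>
lemma power_spread_level_cell_ge_2:
  assumes x: "x \<in> X" and j: "1 \<le> j"
  shows "2 \<le> power_spread (j + L) (level j x) x"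
proof -
  define m where "m = level j x"
  obtain m' where m: "m = Suc m'" and pm': "p \<le> m'"
    using p_less_level[OF x j] by (cases m) (auto simp: m_def)
  define u where "u = dyadic_floor m x"
  define u' where "u' = dyadic_floor m' x"
  define h :: real where "h = 1/2^m"
  have h: "0 < h" "1/(2::real)^m' = 2*h" by (simp_all add: h_def m)
  have u'a: "1 + 1/2^p \<le> u'" using dyadic_floor_bounds(1)[OF x pm'] by (simp add: u'_def)
  have u'1: "1 \<le> u'" using one_le_dyadic_floor[OF x pm'] by (simp add: u'_def)
  have u'u: "u' \<le> u" using dyadic_floor_nest(1)[of m' m x] by (simp add: m u_def u'_def)
  have jh: "real j * h \<le> eta"
    using power_spread_ge[OF x, of m j] level[OF x, of j] by (simp add: m_def h_def)
  have "eta < power_spread j m' x" using power_spread_below_level[OF pm'] m by (simp add: m_def)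
  also have "\<dots> \<le> real j * (u' + 2*h)^(j-1) * (2*h)"
    unfolding power_spread_def u'_def[symmetric] h(2) using power_diff_le[of u' "u' + 2*h" j] u'1 h
    by simp
  also have "\<dots> \<le> real j * (2 * u'^(j-1)) * (2*h)"
  proof (intro mult_right_mono mult_left_mono add_power_le_2_power)
    have "real (j-1) * (2*h) \<le> real j * (2*h)" using h by (intro mult_right_mono) auto
    then show "real (j-1) * (2*h) \<le> 1/2" using jh eta_le by linarith
  qed (use u'1 h in auto)
  finally have spread_j: "eta < 4 * (real j * h * u'^(j-1))" by (simp add: algebra_simps)
  have "8/eta \<le> u'^L"
    using L_large power_mono[OF u'a, of L] by (smt (verit) divide_nonneg_nonneg zero_le_power)
  then have "(eta/4) * (8/eta) \<le> (real j * h * u'^(j-1)) * u'^L"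
    using spread_j eta_pos by (intro mult_mono) auto
  then have "2 \<le> real j * u'^(j+L-1) * h" using eta_pos j by (simp add: power_add[symmetric] algebra_simps)
  also have "\<dots> \<le> real (j+L) * u^(j+L-1) * h"
    using u'u u'1 h by (intro mult_right_mono mult_mono power_mono) auto
  also have "\<dots> \<le> power_spread (j+L) m x"
    unfolding power_spread_def u_def[symmetric] h_def[symmetric]
    using power_diff_ge[of u "u + h" "j+L"] u'u u'1 h by simp
  finally show ?thesis by (simp add: m_def)
qed

lemma level_cell_width_ge:
  assumes x: "x \<in> X" and j: "1 \<le> j"
  shows "1 / (real (j+L) * dyadic_floor (level j x) x ^ (j+L-1)) \<le> 1/2^(level j x)"
proof -
  define n where "n = j + L"
  define m where "m = level j x"
  define u where "u = dyadic_floor m x"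
  define h :: real where "h = 1/2^m"
  have pm: "p \<le> m" using level[OF x] by (simp add: m_def)
  have u1: "1 \<le> u" using one_le_dyadic_floor[OF x pm] by (simp add: u_def)
  have h: "0 < h" by (simp add: h_def)
  have jh: "real j * h \<le> eta"
    using power_spread_ge[OF x pm, of j] level[OF x, of j] by (simp add: m_def h_def)
  then have "h \<le> eta" using j h by (smt (verit) mult_le_cancel_right1 of_nat_1 of_nat_mono)
  have "2 \<le> power_spread n m x" using power_spread_level_cell_ge_2[OF x j] by (simp add: n_def m_def)
  also have "\<dots> \<le> real n * (u + h)^(n-1) * h"
    unfolding power_spread_def u_def[symmetric] h_def[symmetric]
    using power_diff_le[of u "u + h" n] u1 h by simp
  also have "\<dots> \<le> real n * (2 * u^(n-1)) * h"
  proof (intro mult_right_mono mult_left_mono add_power_le_2_power)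
    have "real (n-1) * h \<le> real n * h" using h by (intro mult_right_mono) auto
    also have "\<dots> = real j * h + real L * h" by (simp add: n_def algebra_simps)
    also have "\<dots> \<le> eta + real L * eta" using jh \<open>h \<le> eta\<close> by (intro add_mono mult_left_mono) auto
    finally show "real (n-1) * h \<le> 1/2" using eta_L by (simp add: algebra_simps)
  qed (use u1 h in auto)
  finally have "1 \<le> real n * u^(n-1) * h" by simp
  moreover have "0 < real n * u^(n-1)" using u1 j by (simp add: n_def)
  ultimately show ?thesis by (simp add: field_simps n_def m_def u_def h_def)
qed

lemma measure_near_int_level_cell:
  assumes x: "x \<in> X" and j: "1 \<le> j"
  shows "measure lborel (near_int (j+L) \<inter> dyadic_cell (level j x) x) \<le> 30*eta / 2^(level j x)"
proof -
  define n where "n = j + L"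
  define m where "m = level j x"
  define u where "u = dyadic_floor m x"
  define h :: real where "h = 1/2^m"
  have u1: "1 \<le> u" using one_le_dyadic_floor[OF x] level[OF x, of j] by (simp add: u_def m_def)
  have "near_int n \<inter> dyadic_cell m x = {y\<in>{u..<u+h}. dist_int (y^n) < 2*eta}"
    by (auto simp: near_int_def dyadic_cell_def u_def h_def)
  then have "measure lborel (near_int n \<inter> dyadic_cell m x)
      \<le> 3*(2*eta)*((u+h)-u) + 12*(2*eta)/(real n * u^(n-1))"
    using measure_power_near_integers[of u "u+h" n "2*eta"] u1 j eta_pos eta_le
    by (simp add: n_def h_def)
  also have "12*(2*eta)/(real n * u^(n-1)) = 24*eta*(1/(real n * u^(n-1)))" by simp
  also have "\<dots> \<le> 24*eta*h"
    using level_cell_width_ge[OF x j] eta_pos by (intro mult_left_mono) (auto simp: n_def m_def u_def h_def)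
  finally show ?thesis by (simp add: n_def m_def h_def)
qed

lemma measure_near_int_survivors_level_cell:
  assumes x: "x \<in> X" and j: "1 \<le> j"
  shows "measure lborel (survivors j \<inter> near_int (j+L) \<inter> dyadic_cell (level j x) x)
    \<le> 30*eta * measure lborel (survivors j \<inter> dyadic_cell (level j x) x)"
proof (cases "x \<in> survivors j")
  case True
  then have "dyadic_cell (level j x) x \<subseteq> survivors j" using survivors_cell[OF True order_refl] by blast
  then have "survivors j \<inter> near_int (j+L) \<inter> dyadic_cell (level j x) x = near_int (j+L) \<inter> dyadic_cell (level j x) x"
    "survivors j \<inter> dyadic_cell (level j x) x = dyadic_cell (level j x) x" by blast+
  then show ?thesis using measure_near_int_level_cell[OF x j] by (simp add: measure_dyadic_cell)
next
  case False
  then have "survivors j \<inter> dyadic_cell (level j x) x = {}"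
    using survivors_cell_rev[OF x order_refl] by blast
  moreover from this have "survivors j \<inter> near_int (j+L) \<inter> dyadic_cell (level j x) x = {}" by blast
  ultimately show ?thesis by simp
qed

lemma measure_Int_Un_disjoint:
  assumes "S \<subseteq> X" "S \<in> sets lborel" "A \<inter> B = {}" "A \<in> sets lborel" "B \<in> sets lborel"
  shows "measure lborel (S \<inter> (A \<union> B)) = measure lborel (S \<inter> A) + measure lborel (S \<inter> B)"
proof -
  have "S \<inter> (A \<union> B) = (S \<inter> A) \<union> (S \<inter> B)" by blast
  moreover have "S \<inter> A \<in> fmeasurable lborel" "S \<inter> B \<in> fmeasurable lborel"
    using assms by (auto intro!: fmeasurable_subset_X)
  moreover have "(S \<inter> A) \<inter> (S \<inter> B) = {}" using assms(3) by blast
  ultimately show ?thesis by (simp add: measure_Un3)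
qed

lemma less_level_on_cell:
  assumes x: "x \<in> X" and "p \<le> m" "m < level j x" and y: "y \<in> dyadic_cell m x"
  shows "m < level j y"
proof (rule ccontr)
  assume "\<not> m < level j y"
  then have ly: "level j y \<le> m" by simp
  have y': "y \<in> X" using dyadic_cell_subset_X[OF x \<open>p \<le> m\<close>] y by blast
  have "y \<in> dyadic_cell (level j y) x" using dyadic_cell_subset[OF ly] y by blast
  then have "power_spread j (level j y) x = power_spread j (level j y) y"
    by (rule power_spread_cong[symmetric])
  also have "\<dots> \<le> eta" using level[OF y'] by simp
  finally show False
    using power_spread_below_level[of "level j y" j x] level[OF y'] ly \<open>m < level j x\<close> by simp
qed

text \<open>The bound on cells of level \<open>level j\<close> propagates to all coarser cells, since the two halves
  of a cell below that level are again cells to which the bound applies.\<close>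
lemma measure_near_int_survivors_cell:
  assumes j: "1 \<le> j" and x: "x \<in> X" and m: "p \<le> m" "m \<le> level j x"
  shows "measure lborel (survivors j \<inter> near_int (j+L) \<inter> dyadic_cell m x)
    \<le> 30*eta * measure lborel (survivors j \<inter> dyadic_cell m x)"
proof -
  define f where "f T = measure lborel (survivors j \<inter> near_int (j+L) \<inter> T)" for T
  define g where "g T = measure lborel (survivors j \<inter> T)" for T
  have additive: "f (A \<union> B) = f A + f B \<and> g (A \<union> B) = g A + g B"
    if "A \<inter> B = {}" "A \<in> sets lborel" "B \<in> sets lborel" for A B
    unfolding f_def g_def using that survivors_subset_X by (auto intro!: measure_Int_Un_disjoint)
  obtain M where M: "\<forall>x\<in>X. level j x \<le> M" using level_bounded by blast
  have "f (dyadic_cell m x) \<le> 30*eta * g (dyadic_cell m x)"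
    if "x \<in> X" "p \<le> m" "m \<le> level j x" "M - m = d" for d m x
    using that
  proof (induction d arbitrary: m x)
    case 0
    then have "m = level j x" using M by fastforce
    then show ?case using measure_near_int_survivors_level_cell[OF 0(1) j] by (simp add: f_def g_def)
  next
    case (Suc d)
    show ?case
    proof (cases "m = level j x")
      case False
      define x0 where "x0 = dyadic_floor m x"
      define x1 where "x1 = dyadic_floor m x + 1/2^Suc m"
      have "x0 \<in> dyadic_cell m x" "x1 \<in> dyadic_cell m x"
        unfolding x0_def x1_def dyadic_cell_def by (simp_all add: divide_strict_left_mono)
      then have x01: "x0 \<in> X" "x1 \<in> X" using dyadic_cell_subset_X[OF Suc.prems(1,2)] by blast+
      have below: "Suc m \<le> level j y" if "y \<in> dyadic_cell m x" for y
        using less_level_on_cell[OF Suc.prems(1,2) _ that, of j] Suc.prems(3) False by simp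
      have "f (dyadic_cell (Suc m) x0) \<le> 30*eta * g (dyadic_cell (Suc m) x0)"
        "f (dyadic_cell (Suc m) x1) \<le> 30*eta * g (dyadic_cell (Suc m) x1)"
        using Suc.IH x01 Suc.prems below \<open>x0 \<in> dyadic_cell m x\<close> \<open>x1 \<in> dyadic_cell m x\<close> by auto
      moreover have "f (dyadic_cell m x) = f (dyadic_cell (Suc m) x0) + f (dyadic_cell (Suc m) x1)"
        "g (dyadic_cell m x) = g (dyadic_cell (Suc m) x0) + g (dyadic_cell (Suc m) x1)"
        using additive[OF dyadic_cell_split(2)[of m x]]
          dyadic_cell_split(1)[of m x] by (simp_all add: x0_def x1_def)
      ultimately show ?thesis by (simp add: distrib_left)
    qed (use measure_near_int_survivors_level_cell[OF Suc.prems(1) j] in \<open>simp add: f_def g_def\<close>)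
  qed
  then show ?thesis using x m by (simp add: f_def g_def)
qed

lemma measure_near_int_survivors:
  assumes j: "1 \<le> j"
  shows "measure lborel (survivors j \<inter> near_int (j+L)) \<le> 30*eta * measure lborel (survivors j)"
proof -
  define x where "x = 1 + 1/(2::real)^p"
  have x: "x \<in> X" unfolding x_def X_def by (simp add: divide_strict_right_mono)
  have "p \<le> level j x" using level[OF x] by simp
  from measure_near_int_survivors_cell[OF j x order_refl this]
  moreover have "survivors j \<inter> X = survivors j" using survivors_subset_X by blast
  moreover have "survivors j \<inter> near_int (j+L) \<inter> X = survivors j \<inter> near_int (j+L)"
    using survivors_subset_X by blast
  ultimately show ?thesis by (simp add: dyadic_cell_p_eq_X[OF x])
qed

subsection \<open>The measure recursion\<close>

definition mass :: "nat \<Rightarrow> real" where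
  "mass n = measure lborel (survivors n)"

lemma mass_nonneg: "0 \<le> mass n"
  by (simp add: mass_def)

lemma mass_le: "mass n \<le> 1/2^p"
  unfolding mass_def measure_X[symmetric] using survivors_subset_X
  by (intro measure_mono_fmeasurable fmeasurable_subset_X) auto

lemma mass_antimono: "n \<le> n' \<Longrightarrow> mass n' \<le> mass n"
  unfolding mass_def using survivors_antimono survivors_subset_X
  by (intro measure_mono_fmeasurable fmeasurable_subset_X) auto

lemma mass_le_mass_Suc: "mass n \<le> mass (Suc n) + measure lborel (survivors n \<inter> near_int (Suc n))"
proof -
  have "survivors n \<subseteq> survivors (Suc n) \<union> (survivors n \<inter> near_int (Suc n))"
    using survivors_diff_subset_near_int by blast
  then have "mass n \<le> measure lborel (survivors (Suc n) \<union> (survivors n \<inter> near_int (Suc n)))"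
    unfolding mass_def using survivors_subset_X by (intro measure_mono_fmeasurable fmeasurable_subset_X) auto
  also have "\<dots> \<le> mass (Suc n) + measure lborel (survivors n \<inter> near_int (Suc n))"
    unfolding mass_def by (intro measure_Un_le) auto
  finally show ?thesis .
qed

lemma measure_near_int_early:
  "measure lborel (survivors n \<inter> near_int (Suc n)) \<le> 6*eta*(1/2^p) + 24*eta / real (Suc n)"
proof -
  define a :: real where "a = 1 + 1/2^p"
  define b :: real where "b = 1 + 2/2^p"
  have ab: "a \<le> b" by (simp add: a_def b_def divide_right_mono)
  have "survivors n \<inter> near_int (Suc n) \<subseteq> {x\<in>{a..<b}. dist_int (x^Suc n) < 2*eta}"
    using survivors_subset_X[of n] by (auto simp: near_int_def X_def a_def b_def)
  then have "measure lborel (survivors n \<inter> near_int (Suc n)) \<le> measure lborel {x\<in>{a..<b}. dist_int (x^Suc n) < 2*eta}"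
    by (intro measure_mono_fmeasurable fmeasurable_lborel_subset_Icc[of _ a b]) auto
  also have "\<dots> \<le> 3*(2*eta)*(b - a) + 12*(2*eta) / (real (Suc n) * a^(Suc n - 1))"
    using ab eta_pos eta_le by (intro measure_power_near_integers) (auto simp: a_def)
  also have "b - a = 1/2^p" by (simp add: a_def b_def diff_divide_distrib[symmetric])
  also have "12*(2*eta) / (real (Suc n) * a^(Suc n - 1)) \<le> 24*eta / real (Suc n)"
  proof -
    have "real (Suc n) * 1 \<le> real (Suc n) * a^n" unfolding a_def by (intro mult_left_mono one_le_power) auto
    then show ?thesis using eta_pos by (simp add: frac_le)
  qed
  finally show ?thesis by simp
qed

lemma one_le_L: "1 \<le> L"
  using L_large eta_le eta_pos by (cases L) (auto simp: field_simps)

lemma measure_near_int_late: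
  assumes "L \<le> n"
  shows "measure lborel (survivors n \<inter> near_int (Suc n)) \<le> 30*eta * mass (Suc n - L)"
proof -
  define j where "j = Suc n - L"
  have j: "1 \<le> j" "j \<le> n" "Suc n = j + L" using assms one_le_L by (auto simp: j_def)
  then have "survivors n \<inter> near_int (Suc n) \<subseteq> survivors j \<inter> near_int (j+L)"
    using survivors_antimono[OF j(2)] by auto
  then have "measure lborel (survivors n \<inter> near_int (Suc n)) \<le> measure lborel (survivors j \<inter> near_int (j+L))"
    using survivors_subset_X by (intro measure_mono_fmeasurable fmeasurable_subset_X) auto
  also have "\<dots> \<le> 30*eta * mass j" unfolding mass_def by (rule measure_near_int_survivors[OF j(1)])
  finally show ?thesis by (simp add: j_def)
qed

lemma mass_L: "1/2^p/2 \<le> mass L"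
proof -
  have mass_ge: "1/2^p - (\<Sum>n<N. 6*eta*(1/2^p) + 24*eta / real (Suc n)) \<le> mass N" for N
  proof (induction N)
    case 0
    show ?case using measure_X by (simp add: mass_def survivors_0)
  next
    case (Suc N)
    then show ?case using mass_le_mass_Suc[of N] measure_near_int_early[of N] by simp
  qed
  have "(\<Sum>n<L. 6*eta*(1/2^p) + 24*eta / real (Suc n)) = 6*eta*(1/2^p)*real L + 24*eta*harm L"
    by (simp add: sum.distrib sum_distrib_left harm_altdef divide_inverse mult.assoc)
  then show ?thesis using early_loss mass_ge[of L] by linarith
qed

lemma mass_L_pos: "0 < mass L"
  using mass_L zero_less_power[of "2::real" p] by (smt (verit) divide_pos_pos)

lemma mass_geometric:
  assumes step: "\<And>k. L \<le> k \<Longrightarrow> k < n \<Longrightarrow> (1 - 120*eta) * mass k \<le> mass (Suc k)"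
    and "L \<le> j" "j \<le> n"
  shows "(1 - 120*eta)^(n-j) * mass j \<le> mass n"
  using \<open>j \<le> n\<close> step
proof (induction n rule: dec_induct)
  case (step n)
  have "(1 - 120*eta)^(Suc n - j) * mass j = (1 - 120*eta) * ((1 - 120*eta)^(n-j) * mass j)"
    using step.hyps by (simp add: Suc_diff_le)
  also have "\<dots> \<le> (1 - 120*eta) * mass n" using step eta_120 by (intro mult_left_mono) auto
  also have "\<dots> \<le> mass (Suc n)" using step.prems step.hyps \<open>L \<le> j\<close> by auto
  finally show ?case .
qed simp

lemma half_le_decay: "k \<le> L \<Longrightarrow> 1/2 \<le> (1 - 120*eta)^k"
  using late_decay eta_120 eta_pos power_decreasing[of k L "1 - 120*eta"] by linarith

text \<open>Beyond \<open>L\<close> steps each step loses at most \<open>30 eta\<close> times the mass \<open>L\<close> steps earlier,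
  which by strong induction is at most \<open>4\<close> times the current mass.\<close>
lemma mass_Suc_ge: "L \<le> n \<Longrightarrow> (1 - 120*eta) * mass n \<le> mass (Suc n)"
proof (induction n rule: less_induct)
  case (less n)
  define j where "j = Suc n - L"
  have step: "\<And>k. L \<le> k \<Longrightarrow> k < n \<Longrightarrow> (1 - 120*eta) * mass k \<le> mass (Suc k)"
    using less.IH by blast
  have "mass j \<le> 4 * mass n"
  proof (cases "L \<le> j")
    case True
    have "j \<le> n" "n - j \<le> L" using less.prems one_le_L by (auto simp: j_def)
    then have "(1 - 120*eta)^(n-j) * mass j \<le> mass n" "1/2 \<le> (1 - 120*eta)^(n-j)"
      using mass_geometric[OF step True] half_le_decay by auto
    then have "1/2 * mass j \<le> mass n" using mass_nonneg[of j] by (meson mult_right_mono order_trans)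
    then show ?thesis using mass_nonneg[of n] by simp
  next
    case False
    have "(1 - 120*eta)^(n-L) * mass L \<le> mass n" "1/2 \<le> (1 - 120*eta)^(n-L)"
      using mass_geometric[OF step order_refl less.prems] half_le_decay False by (auto simp: j_def)
    moreover have "mass j \<le> 2 * mass L" using mass_le[of j] mass_L by simp
    moreover have "1/2 * mass L \<le> (1 - 120*eta)^(n-L) * mass L"
      using calculation(2) mass_nonneg[of L] by (intro mult_right_mono)
    ultimately show ?thesis by linarith
  qed
  then have "30*eta * mass j \<le> 30*eta * (4 * mass n)" using eta_pos by (intro mult_left_mono) auto
  then show ?case
    using mass_le_mass_Suc[of n] measure_near_int_late[OF less.prems] by (simp add: j_def algebra_simps)
qed

lemma mass_pos: "0 < mass n"
proof (cases "L \<le> n")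
  case True
  have "(1 - 120*eta)^(n-L) * mass L \<le> mass n"
    using mass_Suc_ge by (intro mass_geometric[OF _ order_refl True])
  moreover have "0 < (1 - 120*eta)^(n-L) * mass L" using eta_120 mass_L_pos by simp
  ultimately show ?thesis by simp
next
  case False
  then show ?thesis using mass_antimono[of n L] mass_L_pos by simp
qed

lemma exists_avoiding_integers:
  "\<exists>\<epsilon>\<in>{1/2^p .. 2/2^p}. \<forall>n\<ge>1. eta \<le> dist_int ((1 + \<epsilon>)^n)"
proof -
  define K where "K N = {x\<in>{1 + 1/2^p .. 1 + 2/2^p}. \<forall>k\<in>{1..N}. eta \<le> dist_int (x^k)}" for N
  have "K N \<noteq> {}" for N
  proof -
    obtain x where "x \<in> survivors N" using mass_pos[of N] by (force simp: mass_def)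
    then have "x \<in> K N" using survivors_subset_X dist_int_ge_eta_if_survivor by (force simp: K_def X_def)
    then show ?thesis by blast
  qed
  moreover have "compact (K N)" for N
  proof -
    have "closed {x. eta \<le> dist_int (x^k)}" for k
      by (intro closed_Collect_le continuous_on_const continuous_on_compose2[OF continuous_on_dist_int])
        (auto intro!: continuous_intros)
    then have "closed (\<Inter>k\<in>{1..N}. {x. eta \<le> dist_int (x^k)})" by auto
    moreover have "K N = {1 + 1/2^p .. 1 + 2/2^p} \<inter> (\<Inter>k\<in>{1..N}. {x. eta \<le> dist_int (x^k)})"
      unfolding K_def by auto
    ultimately show ?thesis by (simp add: compact_Int_closed)
  qed
  moreover have "m \<le> n \<Longrightarrow> K n \<subseteq> K m" for m n unfolding K_def by auto
  ultimately obtain x where x: "x \<in> (\<Inter>N. K N)" using compact_nest[of K] by blast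
  have "x - 1 \<in> {1/2^p .. 2/2^p}" using x by (auto simp: K_def)
  moreover have "eta \<le> dist_int ((1 + (x - 1))^n)" if "1 \<le> n" for n
  proof -
    have "x \<in> K n" using x by blast
    then show ?thesis using that by (simp add: K_def)
  qed
  ultimately show ?thesis by blast
qed

end

subsection \<open>Choice of the parameters\<close>

lemma harm_le_ln_plus_1: "0 < n \<Longrightarrow> harm n \<le> ln (real n) + (1::real)"
  using euler_mascheroni_sequence_decreasing[of 1 n] by (simp add: harm_def)

lemma power_15_mult_le_power:
  assumes "24 \<le> p"
  shows "(2::real)^15 * real p \<le> 2^p"
  using assms
proof (induction p rule: dec_induct)
  case (step p)
  have "(2::real)^15 * real (Suc p) \<le> 2 * (2^15 * real p)" using step.hyps by simp
  also have "\<dots> \<le> 2 * 2^p" using step.IH by simp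
  finally show ?case by simp
qed simp

lemma dyadic_avoidance_instance:
  assumes p: "24 \<le> p"
  shows "dyadic_avoidance p (1/(2^12 * real p * 2^p)) (2*p*2^p)"
proof -
  define a :: real where "a = 1/2^p"
  define eta :: real where "eta = 1/(2^12 * real p * 2^p)"
  define L :: nat where "L = 2*p*2^p"
  have p1: "(1::real) \<le> real p" using p by simp
  have a: "0 < a" by (simp add: a_def)
  have eta: "0 < eta" "eta = a/(2^12 * real p)" using p by (simp_all add: eta_def a_def)
  have eta_L: "eta * real L = 2/2^12" unfolding eta_def L_def using p by (simp add: field_simps)
  have eta_small: "eta \<le> 1/2^12"
  proof -
    have "(1::real) \<le> real p * 2^p"
      using p1 one_le_power[of "2::real" p] mult_mono[of 1 "real p" 1 "2^p"] by simp
    then show ?thesis unfolding eta_def by (simp add: frac_le)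
  qed
  have "8/eta \<le> (1 + a)^L"
  proof -
    have "8/eta = 2^15 * real p * 2^p" by (simp add: eta_def)
    also have "\<dots> \<le> 2^p * 2^p" using power_15_mult_le_power[OF p] by (intro mult_right_mono) auto
    also have "\<dots> = 2^(2*p)" by (simp add: power_add[symmetric] mult_2)
    also have "\<dots> \<le> ((1 + a)^(2^p))^(2*p)"
    proof (intro power_mono)
      have "1 + real (2^p) * a \<le> (1 + a)^(2^p)" using Bernoulli_inequality[of a "2^p"] a by simp
      then show "2 \<le> (1 + a)^(2^p)" by (simp add: a_def)
    qed simp
    also have "\<dots> = (1 + a)^L" by (simp add: L_def power_mult[symmetric] mult.commute)
    finally show ?thesis .
  qed
  moreover have "6*eta*a*real L + 24*eta*harm L \<le> a/2"
  proof -
    have "ln (real L) \<le> 2 * real p"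
    proof -
      have "ln (real L) = ln 2 + ln (real p) + real p * ln 2"
        using p by (simp add: L_def ln_mult ln_realpow)
      also have "\<dots> \<le> 1 + (real p - 1) + real p * 1"
        using ln_2_less_1 ln_le_minus_one[of "real p"] p by (intro add_mono mult_left_mono) auto
      finally show ?thesis by simp
    qed
    then have "harm L \<le> 2 * real p + 1" using harm_le_ln_plus_1[of L] p by (simp add: L_def)
    then have "24*eta*harm L \<le> 24*eta*(2 * real p + 1)" using eta by (intro mult_left_mono) auto
    also have "\<dots> = a*(24*(2*real p + 1)/(2^12 * real p))" unfolding eta(2) using p1 by (simp add: field_simps)
    also have "\<dots> \<le> a*(72/2^12)" using p1 a by (intro mult_left_mono) (auto simp: field_simps)
    finally have "24*eta*harm L \<le> a*(72/2^12)" .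
    moreover have "6*eta*a*real L = a*(12/2^12)" using eta_L by (simp add: algebra_simps)
    moreover have "a*(12/2^12) + a*(72/2^12) \<le> a/2" using a by simp
    ultimately show ?thesis by linarith
  qed
  moreover have "1/2 \<le> (1 - 120*eta)^L"
  proof -
    have "1 - real L * (120*eta) \<le> (1 - 120*eta)^L"
      using Bernoulli_inequality[of "-(120*eta)" L] eta_small by (simp add: algebra_simps)
    then show ?thesis using eta_L by (simp add: algebra_simps)
  qed
  moreover have "eta < a"
  proof -
    have "a * 1 < a * (2^12 * real p)" using a p1 by (intro mult_strict_left_mono) auto
    then show ?thesis unfolding eta(2) using p1 by (simp add: field_simps)
  qed
  ultimately show ?thesis
    using p eta eta_small eta_L unfolding eta_def[symmetric] L_def[symmetric] a_def
    by unfold_locales (simp_all add: algebra_simps)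
qed

lemma eps_div_abs_ln_less:
  fixes \<epsilon> :: real
  assumes p: "24 \<le> p" and \<epsilon>: "1/2^p \<le> \<epsilon>" "\<epsilon> \<le> 2/2^p"
  shows "2 powr (-17) * \<epsilon> / \<bar>ln \<epsilon>\<bar> < 1/(2^12 * real p * 2^p)"
proof -
  have p1: "23 \<le> real p - 1" using p by simp
  have "(2::real)^24 \<le> 2^p" using p by (intro power_increasing) auto
  then have "2/(2::real)^p \<le> 2/2^24" by (intro divide_left_mono) auto
  moreover have "0 < 1/(2::real)^p" "2/(2::real)^24 < 1" by simp_all
  ultimately have \<epsilon>1: "0 < \<epsilon>" "\<epsilon> < 1" using \<epsilon> by linarith+
  have "(real p - 1) * (2/3) \<le> (real p - 1) * ln 2" using ln2_ge_two_thirds p1 by (intro mult_left_mono) auto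
  also have "\<dots> = - ln (2/2^p)" by (simp add: ln_div ln_realpow algebra_simps)
  also have "\<dots> \<le> - ln \<epsilon>" using \<epsilon> \<epsilon>1 by simp
  also have "\<dots> = \<bar>ln \<epsilon>\<bar>" using \<epsilon>1 by simp
  finally have ln: "(real p - 1) * (2/3) \<le> \<bar>ln \<epsilon>\<bar>" .
  have "2 powr (-17) * \<epsilon> / \<bar>ln \<epsilon>\<bar> = (1/2^17) * (\<epsilon> / \<bar>ln \<epsilon>\<bar>)" by (simp add: powr_minus_divide)
  also have "\<dots> \<le> (1/2^17) * ((2/2^p) / ((real p - 1) * (2/3)))"
    using \<epsilon> \<epsilon>1 ln p1 by (intro mult_left_mono frac_le) auto
  also have "\<dots> = (1/2^p) * (3 / (2^17 * (real p - 1)))" using p1 by (simp add: field_simps)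
  also have "\<dots> < (1/2^p) * (1 / (2^12 * real p))" using p1 by (intro mult_strict_left_mono) (auto simp: field_simps)
  also have "\<dots> = 1/(2^12 * real p * 2^p)" by simp
  finally show ?thesis .
qed

lemma exists_power2_less:
  fixes \<delta> :: real
  assumes "0 < \<delta>"
  shows "\<exists>p\<ge>24. 2/2^p < \<delta>"
proof -
  obtain n where n: "2/\<delta> < 2^n" using real_arch_pow[of 2 "2/\<delta>"] by auto
  have "(2::real)^n \<le> 2^max 24 n" by (intro power_increasing) auto
  then have "2/\<delta> < 2^max 24 n" using n by linarith
  then show ?thesis using assms by (intro exI[of _ "max 24 n"]) (simp add: field_simps)
qed

theorem theorem1:
  fixes \<delta> :: real
  assumes "\<delta> > 0"
  shows "\<exists>\<epsilon>::real. 0 < \<epsilon> \<and> \<epsilon> < \<delta> \<and>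
    (INF n\<in>{1::nat..}. dist_int ((1 + \<epsilon>) ^ n)) > 2 powr (-17) * \<epsilon> / \<bar>ln \<epsilon>\<bar>"
proof -
  obtain p where p: "24 \<le> p" "2/2^p < \<delta>" using exists_power2_less[OF assms] by blast
  define eta :: real where "eta = 1/(2^12 * real p * 2^p)"
  interpret dyadic_avoidance p eta "2*p*2^p"
    unfolding eta_def by (rule dyadic_avoidance_instance[OF p(1)])
  obtain \<epsilon> where \<epsilon>: "1/2^p \<le> \<epsilon>" "\<epsilon> \<le> 2/2^p" and avoid: "\<And>n. 1 \<le> n \<Longrightarrow> eta \<le> dist_int ((1 + \<epsilon>)^n)"
    using exists_avoiding_integers by auto
  have "eta \<le> (INF n\<in>{1::nat..}. dist_int ((1 + \<epsilon>)^n))"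
    using avoid by (intro cINF_greatest) auto
  moreover have "2 powr (-17) * \<epsilon> / \<bar>ln \<epsilon>\<bar> < eta"
    unfolding eta_def using \<epsilon> by (rule eps_div_abs_ln_less[OF p(1)])
  moreover have "0 < \<epsilon>" using \<epsilon>(1) by (smt (verit) zero_less_divide_1_iff zero_less_power)
  ultimately show ?thesis using \<epsilon>(2) p(2) by (intro exI[of _ \<epsilon>]) auto
qed

end
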